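(* Let $\bm{\mu}\in X^{\mathcal{L}(\mathcal{T})}$ with $V_{s_0}(\bm{\mu})\neq\theta$, let $\ell\in\mathcal{L}(\mathcal{T})$, and let $s_0,s_1,\dots,s_k=\ell$ be the path from the root to $\ell$. Then $w^{s_0}_\ell(\bm{\mu})>0$ if and only if both: $d_{s_i}(\bm{\mu})>0$ for all $i=0,1,\dots,k$; and $s_{i+1}=c^*(s_i)$ for every $i\in\{0,\dots,k-1\}$ with $L(s_i)=$MAX in case $a_{s_0}(\bm{\mu})=$'win' (respectively with $L(s_i)=$MIN in case $a_{s_0}(\bm{\mu})=$'lose').
   Context: $\mathcal{T}$ is a finite rooted tree with node set $S$, root $s_0$, children $\mathcal{C}(s)$, leaves $\mathcal{L}(\mathcal{T})$, $\mathcal{D}(s)$ the leaves descending from $s$; internal labels $L(s)\in\{\text{MAX},\text{MIN}\}$. $X\subseteq\mathbb{R}$ mean-parameter set of a one-parameter exponential family; $d(x,y)$ KL divergence between members with means $x,y$; threshold $\theta\in X$. $V_s(\bm{\mu})=\mu_s$ at leaves, max/min of children's values at MAX/MIN nodes; $a_s(\bm{\mu})=$'win' iff $V_s(\bm{\mu})\ge\theta$. Recursive weights: $a^*=a_{s_0}(\bm{\mu})$; $P=$MAX, $Q=$MIN if $a^*=$'win', swapped if 'lose'. Leaf $s$: $w^s_s=1$, $d_s=d(\mu_s,\theta)$ if ($a^*=$'win', $\mu_s\ge\theta$) or ($a^*=$'lose', $\mu_s<\theta$), else $0$. $L(s)=P$: $d_s=\max_c d_c$, with a fixed choice $c^*(s)\in\arg\max_{c\in\mathcal{C}(s)}d_c$;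 if $d_s>0$: $w^s_\ell=w^{c^*(s)}_\ell$ for $\ell\in\mathcal{D}(c^*(s))$, $0$ for other $\ell\in\mathcal{D}(s)$. $L(s)=Q$, all $d_c>0$: $d_s=(\sum_c1/d_c)^{-1}$, $w^s_\ell=\frac{w^c_\ell/d_c}{\sum_{c'}1/d_{c'}}$ for $\ell\in\mathcal{D}(c)$. $L(s)=Q$ otherwise: $d_s=0$. Internal $s$ with $d_s=0$: $\bm{w}^s$ fixed arbitrary probability vector on $\mathcal{D}(s)$. *)

theory Defs
  imports Complex_Main
begin

datatype label = MaxL | MinL

datatype 'a gtree = Leaf 'a | Node 'a label "'a gtree list"

fun groot :: "'a gtree \<Rightarrow> 'a" where
  "groot (Leaf a) = a"
| "groot (Node a _ _) = a"

fun children :: "'a gtree \<Rightarrow> 'a gtree list" where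
  "children (Leaf a) = []"
| "children (Node _ _ cs) = cs"

fun nodes :: "'a gtree \<Rightarrow> 'a list" where
  "nodes (Leaf a) = [a]"
| "nodes (Node a _ cs) = a # concat (map nodes cs)"

fun leaves :: "'a gtree \<Rightarrow> 'a set" where
  "leaves (Leaf a) = {a}"
| "leaves (Node _ _ cs) = (\<Union>c\<in>set cs. leaves c)"

fun subtrees :: "'a gtree \<Rightarrow> 'a gtree set" where
  "subtrees (Leaf a) = {Leaf a}"
| "subtrees (Node a L cs) = insert (Node a L cs) (\<Union>c\<in>set cs. subtrees c)"

definition wf_tree :: "'a gtree \<Rightarrow> bool" where
  "wf_tree t \<longleftrightarrow> distinct (nodes t) \<and> (\<forall>a L cs. Node a L cs \<in> subtrees t \<longrightarrow> cs \<noteq> [])"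

fun tval :: "('a \<Rightarrow> real) \<Rightarrow> 'a gtree \<Rightarrow> real" where
  "tval \<mu> (Leaf a) = \<mu> a"
| "tval \<mu> (Node a MaxL cs) = Max (set (map (tval \<mu>) cs))"
| "tval \<mu> (Node a MinL cs) = Min (set (map (tval \<mu>) cs))"

definition plab :: "bool \<Rightarrow> label" where
  "plab win = (if win then MaxL else MinL)"

text \<open>Recursive complexities d_s; win = (a* = 'win').\<close>
fun dd :: "(real \<Rightarrow> real \<Rightarrow> real) \<Rightarrow> real \<Rightarrow> bool \<Rightarrow> ('a \<Rightarrow> real) \<Rightarrow> 'a gtree \<Rightarrow> real" where
  "dd d \<theta> win \<mu> (Leaf a) =
     (if (win \<and> \<theta> \<le> \<mu> a) \<or> (\<not> win \<and> \<mu> a < \<theta>) then d (\<mu> a) \<theta> else 0)"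
| "dd d \<theta> win \<mu> (Node a L cs) =
     (if L = plab win then Max (set (map (dd d \<theta> win \<mu>) cs))
      else if list_all (\<lambda>c. 0 < dd d \<theta> win \<mu> c) cs
      then inverse (\<Sum>c\<leftarrow>cs. inverse (dd d \<theta> win \<mu> c))
      else 0)"

text \<open>Recursive weights w^s_l (for leaves l below s). cstar a is the identifier of the
  chosen child c*(a); wfb a is the fallback probability vector used when d_s = 0.\<close>
fun wt :: "(real \<Rightarrow> real \<Rightarrow> real) \<Rightarrow> real \<Rightarrow> bool \<Rightarrow> ('a \<Rightarrow> real) \<Rightarrow> ('a \<Rightarrow> 'a)
           \<Rightarrow> ('a \<Rightarrow> 'a \<Rightarrow> real) \<Rightarrow> 'a gtree \<Rightarrow> 'a \<Rightarrow> real" where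
  "wt d \<theta> win \<mu> cstar wfb (Leaf a) l = (if l = a then 1 else 0)"
| "wt d \<theta> win \<mu> cstar wfb (Node a L cs) l =
     (if 0 < dd d \<theta> win \<mu> (Node a L cs) then
        (if L = plab win then
           (\<Sum>c\<leftarrow>cs. if groot c = cstar a \<and> l \<in> leaves c then wt d \<theta> win \<mu> cstar wfb c l else 0)
         else
           (\<Sum>c\<leftarrow>cs. if l \<in> leaves c then wt d \<theta> win \<mu> cstar wfb c l / dd d \<theta> win \<mu> c else 0)
           / (\<Sum>c\<leftarrow>cs. inverse (dd d \<theta> win \<mu> c)))
      else wfb a l)"

text \<open>KL divergence of a one-parameter exponential family with log-partition A on the
  natural-parameter interval I, mean map A' (= derivative of A); the mean-parameter
  set is X = A' ` I.  d(x,y) = KL(P_x || P_y).\<close>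
definition kl :: "(real \<Rightarrow> real) \<Rightarrow> (real \<Rightarrow> real) \<Rightarrow> real set \<Rightarrow> real \<Rightarrow> real \<Rightarrow> real" where
  "kl A A' I x y = (let ex = inv_into I A' x; ey = inv_into I A' y
                    in A ey - A ex - x * (ey - ex))"

definition root_path :: "'a gtree \<Rightarrow> 'a gtree list \<Rightarrow> 'a \<Rightarrow> bool" where
  "root_path t ts l \<longleftrightarrow> ts \<noteq> [] \<and> hd ts = t \<and> last ts = Leaf l \<and>
     (\<forall>i. Suc i < length ts \<longrightarrow> ts ! Suc i \<in> set (children (ts ! i)))"

end

theory Submission
  imports Defs
begin

(* Along the path s_0, ..., s_k = l the weight is passed down multiplicatively: a P-node
   hands w_l on only to its chosen child c*(s), while a Q-node with d_s > 0 multiplies it by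
   the positive factor (1/d_c) / (sum_c' 1/d_c').  As distinct children have disjoint leaf
   sets, w^{s_i}_l > 0 iff the step to s_{i+1} respects the choice and w^{s_{i+1}}_l > 0,
   provided d_{s_i} > 0; and d remains positive along such steps, since d_{c*(s)} = d_s at
   P-nodes and every child has d_c > 0 at a Q-node with d_s > 0.  The induction starts
   because d_{s_0} > 0: the strict outcome V_{s_0} <> theta is inherited by enough leaves,
   where d(mu, theta) > 0 by strict convexity of the log-partition function.  Hence the
   fallback vectors used when d_s = 0 never matter, and openness of I is not needed. *)

lemma successively_iff_nth:
  "successively R xs \<longleftrightarrow> (\<forall>i. Suc i < length xs \<longrightarrow> R (xs ! i) (xs ! Suc i))"
proof (induction xs rule: induct_list012)
  case (3 x y zs)
  have "(\<forall>i. Suc i < length (x # y # zs) \<longrightarrow> R ((x # y # zs) ! i) ((x # y # zs) ! Suc i)) \<longleftrightarrow>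
        R x y \<and> (\<forall>i. Suc i < length (y # zs) \<longrightarrow> R ((y # zs) ! i) ((y # zs) ! Suc i))"
    by (auto simp: All_less_Suc2 simp del: nth_Cons_Suc)
  then show ?case using 3(2) by simp
qed simp_all

lemma sum_list_eq_single:
  fixes f :: "'b \<Rightarrow> 'a::comm_monoid_add"
  assumes "distinct xs" "x \<in> set xs" "\<And>y. y \<in> set xs \<Longrightarrow> y \<noteq> x \<Longrightarrow> f y = 0"
  shows "sum_list (map f xs) = f x"
proof -
  have "sum_list (map f xs) = sum f (set xs)"
    using assms(1) by (simp add: sum_list_distinct_conv_sum_set)
  also have "\<dots> = sum f {x}"
    using assms(2,3) by (intro sum.mono_neutral_right) auto
  finally show ?thesis by simp
qed

lemma sum_list_pos:
  fixes f :: "'b \<Rightarrow> 'a::ordered_comm_monoid_add"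
  shows "xs \<noteq> [] \<Longrightarrow> \<forall>x\<in>set xs. 0 < f x \<Longrightarrow> 0 < sum_list (map f xs)"
proof (induction xs)
  case (Cons y ys)
  then show ?case by (cases "ys = []") (auto intro: add_pos_pos)
qed simp

lemma mvt_in_interval:
  assumes I_int: "\<forall>x\<in>I. \<forall>y\<in>I. \<forall>z. x \<le> z \<and> z \<le> y \<longrightarrow> z \<in> I"
    and A_deriv: "\<forall>\<eta>\<in>I. (A has_real_derivative A' \<eta>) (at \<eta>)"
    and "u \<in> I" "v \<in> I" "u < v"
  obtains z where "z \<in> I" "u < z" "z < v" "A v - A u = (v - u) * A' z"
proof -
  have between: "z \<in> I" if "u \<le> z" "z \<le> v" for z
    using I_int \<open>u \<in> I\<close> \<open>v \<in> I\<close> that by blast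
  then have "\<forall>z. u \<le> z \<and> z \<le> v \<longrightarrow> (A has_real_derivative A' z) (at z)"
    using A_deriv by blast
  then obtain z where "u < z" "z < v" "A v - A u = (v - u) * A' z"
    using MVT2[OF \<open>u < v\<close>] by blast
  with between show ?thesis using that by simp
qed

lemma tangent_gap_pos:
  assumes I_int: "\<forall>x\<in>I. \<forall>y\<in>I. \<forall>z. x \<le> z \<and> z \<le> y \<longrightarrow> z \<in> I"
    and A_deriv: "\<forall>\<eta>\<in>I. (A has_real_derivative A' \<eta>) (at \<eta>)"
    and A'_mono: "strict_mono_on I A'"
    and "u \<in> I" "v \<in> I" "u \<noteq> v"
  shows "A' u * (v - u) < A v - A u"
proof (cases "u < v")
  case True
  then obtain z where "z \<in> I" "u < z" "A v - A u = (v - u) * A' z"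
    using mvt_in_interval[OF I_int A_deriv \<open>u \<in> I\<close> \<open>v \<in> I\<close>] by metis
  moreover have "A' u < A' z" using A'_mono \<open>u \<in> I\<close> \<open>z \<in> I\<close> \<open>u < z\<close> by (rule strict_mono_onD)
  ultimately show ?thesis using True by (simp add: mult.commute)
next
  case False
  then have "v < u" using \<open>u \<noteq> v\<close> by simp
  then obtain z where "z \<in> I" "z < u" and mvt: "A u - A v = (u - v) * A' z"
    using mvt_in_interval[OF I_int A_deriv \<open>v \<in> I\<close> \<open>u \<in> I\<close>] by metis
  have "A' z < A' u" using A'_mono \<open>z \<in> I\<close> \<open>u \<in> I\<close> \<open>z < u\<close> by (rule strict_mono_onD)
  then have "(u - v) * A' z < (u - v) * A' u" using \<open>v < u\<close> by simp
  then show ?thesis using mvt by (simp add: algebra_simps)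
qed

lemma kl_pos:
  assumes I_int: "\<forall>x\<in>I. \<forall>y\<in>I. \<forall>z. x \<le> z \<and> z \<le> y \<longrightarrow> z \<in> I"
    and A_deriv: "\<forall>\<eta>\<in>I. (A has_real_derivative A' \<eta>) (at \<eta>)"
    and A'_mono: "strict_mono_on I A'"
    and "x \<in> A' ` I" "y \<in> A' ` I" "x \<noteq> y"
  shows "0 < kl A A' I x y"
proof -
  define u v where "u = inv_into I A' x" and "v = inv_into I A' y"
  have "u \<in> I" "v \<in> I" "A' u = x" "A' v = y"
    using assms(4,5) by (auto simp: u_def v_def inv_into_into f_inv_into_f)
  then have "A' u * (v - u) < A v - A u"
    using \<open>x \<noteq> y\<close> by (intro tangent_gap_pos[OF I_int A_deriv A'_mono]) auto
  then show ?thesis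
    using \<open>A' u = x\<close> by (simp add: kl_def Let_def u_def v_def)
qed

lemma nodes_ne_Nil: "nodes s \<noteq> []"
  by (cases s) auto

lemma leaves_subset_nodes: "leaves s \<subseteq> set (nodes s)"
  by (induction s) auto

lemma groot_in_nodes: "groot s \<in> set (nodes s)"
  by (cases s) auto

lemma self_in_subtrees: "s \<in> subtrees s"
  by (cases s) auto

lemma child_in_subtrees: "Node a L cs \<in> subtrees t \<Longrightarrow> c \<in> set cs \<Longrightarrow> c \<in> subtrees t"
  by (induction t) (auto intro: bexI[of _ c] self_in_subtrees)

lemma distinct_nodes_subtree: "s \<in> subtrees t \<Longrightarrow> distinct (nodes t) \<Longrightarrow> distinct (nodes s)"
  by (induction t) (auto simp: distinct_concat_iff)

lemma distinct_nodes_Node: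
  assumes "distinct (nodes (Node a L cs))"
  shows distinct_children: "distinct cs"
    and node_in_unique_child:
      "c \<in> set cs \<Longrightarrow> c' \<in> set cs \<Longrightarrow> x \<in> set (nodes c) \<Longrightarrow> x \<in> set (nodes c') \<Longrightarrow> c = c'"
proof -
  have "distinct (concat (map nodes cs))" using assms by simp
  moreover have "removeAll [] (map nodes cs) = map nodes cs"
    by (intro removeAll_id) (auto simp: nodes_ne_Nil[symmetric])
  ultimately have "distinct (map nodes cs)"
    and disj: "\<forall>c\<in>set cs. \<forall>c'\<in>set cs. nodes c \<noteq> nodes c' \<longrightarrow> set (nodes c) \<inter> set (nodes c') = {}"
    by (auto simp: distinct_concat_iff)
  then show "distinct cs" by (simp add: distinct_map)
  show "c \<in> set cs \<Longrightarrow> c' \<in> set cs \<Longrightarrow> x \<in> set (nodes c) \<Longrightarrow> x \<in> set (nodes c') \<Longrightarrow> c = c'"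
    using disj \<open>distinct (map nodes cs)\<close> by (auto simp: distinct_map inj_on_def)
qed

lemma leaf_in_unique_child:
  "distinct (nodes (Node a L cs)) \<Longrightarrow> c \<in> set cs \<Longrightarrow> c' \<in> set cs \<Longrightarrow>
     x \<in> leaves c \<Longrightarrow> x \<in> leaves c' \<Longrightarrow> c = c'"
  using node_in_unique_child leaves_subset_nodes by (metis subsetD)

lemma inj_on_groot_children: "distinct (nodes (Node a L cs)) \<Longrightarrow> inj_on groot (set cs)"
  using node_in_unique_child groot_in_nodes by (metis inj_onI)

lemma root_path_Cons_Cons:
  "root_path s (x # y # ys) l \<longleftrightarrow> x = s \<and> y \<in> set (children s) \<and> root_path y (y # ys) l"
  unfolding root_path_def by (auto simp: nth_Cons split: nat.splits)

lemma root_path_singleton: "root_path s [x] l \<longleftrightarrow> x = s \<and> s = Leaf l"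
  unfolding root_path_def by auto

lemma leaf_of_root_path: "root_path s ts l \<Longrightarrow> l \<in> leaves s"
proof (induction ts arbitrary: s rule: induct_list012)
  case (3 x y zs)
  then have "y \<in> set (children s)" "l \<in> leaves y"
    by (auto simp: root_path_Cons_Cons)
  then show ?case by (cases s) auto
qed (auto simp: root_path_def)

definition strict_outcome :: "bool \<Rightarrow> real \<Rightarrow> real \<Rightarrow> bool" where
  "strict_outcome win \<theta> v \<longleftrightarrow> (if win then \<theta> < v else v < \<theta>)"

lemma strict_outcome_children:
  assumes "cs \<noteq> []" and "strict_outcome win \<theta> (tval \<mu> (Node a L cs))"
  shows strict_outcome_some_child:
      "L = plab win \<Longrightarrow> \<exists>c\<in>set cs. strict_outcome win \<theta> (tval \<mu> c)"
    and strict_outcome_all_children: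
      "L \<noteq> plab win \<Longrightarrow> \<forall>c\<in>set cs. strict_outcome win \<theta> (tval \<mu> c)"
proof -
  have fin: "finite (tval \<mu> ` set cs)" "tval \<mu> ` set cs \<noteq> {}" using \<open>cs \<noteq> []\<close> by auto
  show "L = plab win \<Longrightarrow> \<exists>c\<in>set cs. strict_outcome win \<theta> (tval \<mu> c)"
    using assms(2) by (cases win) (auto simp: plab_def strict_outcome_def Max_gr_iff Min_less_iff fin assms(1))
  show "L \<noteq> plab win \<Longrightarrow> \<forall>c\<in>set cs. strict_outcome win \<theta> (tval \<mu> c)"
    using assms(2) by (cases win; cases L) (auto simp: plab_def strict_outcome_def Min_gr_iff Max_less_iff fin assms(1))
qed

lemma dd_pos_if_strict_outcome:
  assumes "\<forall>x\<in>leaves s. \<mu> x \<noteq> \<theta> \<longrightarrow> 0 < d (\<mu> x) \<theta>"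
    and "\<forall>a L cs. Node a L cs \<in> subtrees s \<longrightarrow> cs \<noteq> []"
    and "strict_outcome win \<theta> (tval \<mu> s)"
  shows "0 < dd d \<theta> win \<mu> s"
  using assms
proof (induction s)
  case (Leaf x)
  then show ?case by (auto simp: strict_outcome_def split: if_splits)
next
  case (Node a L cs)
  have "cs \<noteq> []" using Node.prems(2) by auto
  have child_pos: "0 < dd d \<theta> win \<mu> c" if "c \<in> set cs" "strict_outcome win \<theta> (tval \<mu> c)" for c
  proof (rule Node.IH[OF that(1) _ _ that(2)])
    show "\<forall>x\<in>leaves c. \<mu> x \<noteq> \<theta> \<longrightarrow> 0 < d (\<mu> x) \<theta>"
      using Node.prems(1) that(1) by auto
    show "\<forall>a L cs. Node a L cs \<in> subtrees c \<longrightarrow> cs \<noteq> []"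
      using Node.prems(2) that(1) by auto
  qed
  show ?case
  proof (cases "L = plab win")
    case True
    then obtain c where "c \<in> set cs" "0 < dd d \<theta> win \<mu> c"
      using strict_outcome_some_child[OF \<open>cs \<noteq> []\<close> Node.prems(3)] child_pos by blast
    moreover have "dd d \<theta> win \<mu> c \<le> Max (dd d \<theta> win \<mu> ` set cs)"
      using \<open>c \<in> set cs\<close> by (intro Max_ge) auto
    ultimately have "0 < Max (dd d \<theta> win \<mu> ` set cs)" by linarith
    then show ?thesis using True by simp
  next
    case False
    then have "\<forall>c\<in>set cs. 0 < dd d \<theta> win \<mu> c"
      using strict_outcome_all_children[OF \<open>cs \<noteq> []\<close> Node.prems(3)] child_pos by blast
    then have "0 < (\<Sum>c\<leftarrow>cs. inverse (dd d \<theta> win \<mu> c))"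
      using \<open>cs \<noteq> []\<close> by (intro sum_list_pos) auto
    then show ?thesis using False \<open>\<forall>c\<in>set cs. 0 < dd d \<theta> win \<mu> c\<close> by (simp add: list_all_iff)
  qed
qed

lemma dd_children_pos_if_not_plab:
  assumes "0 < dd d \<theta> win \<mu> (Node a L cs)" "L \<noteq> plab win"
  shows "\<forall>c\<in>set cs. 0 < dd d \<theta> win \<mu> c"
  using assms by (auto simp: list_all_iff split: if_splits)

definition respects_choice :: "label \<Rightarrow> ('a \<Rightarrow> 'a) \<Rightarrow> 'a gtree \<Rightarrow> 'a gtree \<Rightarrow> bool" where
  "respects_choice P cstar u v \<longleftrightarrow> (\<forall>a cs. u = Node a P cs \<longrightarrow> groot v = cstar a)"

lemma wt_Node_pos_iff:
  assumes distinct: "distinct (nodes (Node a L cs))"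
    and c: "c \<in> set cs" "l \<in> leaves c"
    and pos: "0 < dd d \<theta> win \<mu> (Node a L cs)"
  shows "0 < wt d \<theta> win \<mu> cstar wfb (Node a L cs) l \<longleftrightarrow>
           respects_choice (plab win) cstar (Node a L cs) c \<and> 0 < wt d \<theta> win \<mu> cstar wfb c l"
proof -
  have other: "l \<notin> leaves c'" if "c' \<in> set cs" "c' \<noteq> c" for c'
    using leaf_in_unique_child[OF distinct that(1) c(1) _ c(2)] that(2) by blast
  note single = sum_list_eq_single[OF distinct_children[OF distinct] c(1)]
  note wt_Node = wt.simps(2)[of d \<theta> win \<mu> cstar wfb a L cs l, unfolded if_P[OF pos]]
  show ?thesis
  proof (cases "L = plab win")
    case True
    have "(\<Sum>c'\<leftarrow>cs. if groot c' = cstar a \<and> l \<in> leaves c' then wt d \<theta> win \<mu> cstar wfb c' l else 0)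
        = (if groot c = cstar a then wt d \<theta> win \<mu> cstar wfb c l else 0)"
      using c(2) by (subst single) (auto dest: other)
    then show ?thesis using True unfolding wt_Node by (simp add: respects_choice_def)
  next
    case False
    then have children_pos: "\<forall>c'\<in>set cs. 0 < dd d \<theta> win \<mu> c'"
      by (rule dd_children_pos_if_not_plab[OF pos])
    have "0 < dd d \<theta> win \<mu> c" using children_pos c(1) by blast
    moreover have "0 < (\<Sum>c'\<leftarrow>cs. inverse (dd d \<theta> win \<mu> c'))"
      using children_pos c(1) by (intro sum_list_pos) auto
    ultimately have "0 < dd d \<theta> win \<mu> c * (\<Sum>c'\<leftarrow>cs. inverse (dd d \<theta> win \<mu> c'))"
      by (rule mult_pos_pos)
    moreover have "(\<Sum>c'\<leftarrow>cs. if l \<in> leaves c' then wt d \<theta> win \<mu> cstar wfb c' l / dd d \<theta> win \<mu> c' else 0)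
        = wt d \<theta> win \<mu> cstar wfb c l / dd d \<theta> win \<mu> c"
      using c(2) by (subst single) (auto dest: other)
    ultimately show ?thesis
      using False unfolding wt_Node by (simp add: respects_choice_def zero_less_divide_iff)
  qed
qed

lemma dd_pos_respecting_child:
  assumes distinct: "distinct (nodes (Node a L cs))"
    and c: "c \<in> set cs"
    and pos: "0 < dd d \<theta> win \<mu> (Node a L cs)"
    and argmax: "L = plab win \<Longrightarrow>
      \<exists>c0\<in>set cs. groot c0 = cstar a \<and> (\<forall>c'\<in>set cs. dd d \<theta> win \<mu> c' \<le> dd d \<theta> win \<mu> c0)"
    and respects: "respects_choice (plab win) cstar (Node a L cs) c"
  shows "0 < dd d \<theta> win \<mu> c"
proof (cases "L = plab win")
  case True
  then obtain c0 where c0: "c0 \<in> set cs" "groot c0 = cstar a"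
      and max: "\<forall>c'\<in>set cs. dd d \<theta> win \<mu> c' \<le> dd d \<theta> win \<mu> c0"
    using argmax by blast
  have "groot c = cstar a" using respects True by (simp add: respects_choice_def)
  then have "c0 = c"
    using inj_onD[OF inj_on_groot_children[OF distinct]] c0 c by simp
  have "Max (dd d \<theta> win \<mu> ` set cs) \<in> dd d \<theta> win \<mu> ` set cs"
    using c by (intro Max_in) auto
  then have "dd d \<theta> win \<mu> (Node a L cs) \<le> dd d \<theta> win \<mu> c0"
    using True max by auto
  then show ?thesis using pos \<open>c0 = c\<close> by simp
next
  case False
  then show ?thesis using dd_children_pos_if_not_plab[OF pos] c by blast
qed

lemma wt_pos_iff_root_path:
  assumes "root_path s ts l" "s \<in> subtrees t" "distinct (nodes t)"
    and cstar_argmax: "\<forall>a L cs. Node a L cs \<in> subtrees t \<and> L = plab win \<longrightarrow>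
          (\<exists>c\<in>set cs. groot c = cstar a \<and>
             (\<forall>c'\<in>set cs. dd d \<theta> win \<mu> c' \<le> dd d \<theta> win \<mu> c))"
    and "0 < dd d \<theta> win \<mu> s"
  shows "0 < wt d \<theta> win \<mu> cstar wfb s l \<longleftrightarrow>
           (\<forall>u\<in>set ts. 0 < dd d \<theta> win \<mu> u) \<and> successively (respects_choice (plab win) cstar) ts"
  using assms(1,2,5)
proof (induction ts arbitrary: s rule: induct_list012)
  case 1
  then show ?case by (simp add: root_path_def)
next
  case (2 x)
  then show ?case by (simp add: root_path_singleton)
next
  case (3 x y zs)
  note IH = "3.IH"(2) and s_subtree = "3.prems"(2) and s_pos = "3.prems"(3)
  have "x = s" "y \<in> set (children s)" and path: "root_path y (y # zs) l"
    using "3.prems"(1) by (simp_all add: root_path_Cons_Cons)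
  then obtain a L cs where s: "s = Node a L cs" and y: "y \<in> set cs"
    by (cases s) auto
  have distinct: "distinct (nodes (Node a L cs))"
    using distinct_nodes_subtree[OF s_subtree assms(3)] s by simp
  have y_subtree: "y \<in> subtrees t"
    using child_in_subtrees[OF _ y] s_subtree s by simp
  have step: "0 < wt d \<theta> win \<mu> cstar wfb s l \<longleftrightarrow>
      respects_choice (plab win) cstar s y \<and> 0 < wt d \<theta> win \<mu> cstar wfb y l"
    using wt_Node_pos_iff[OF distinct y leaf_of_root_path[OF path]] s_pos s by simp
  show ?case
  proof (cases "respects_choice (plab win) cstar s y")
    case True
    have "0 < dd d \<theta> win \<mu> y"
    proof (rule dd_pos_respecting_child[OF distinct y])
      show "0 < dd d \<theta> win \<mu> (Node a L cs)" using s_pos s by simp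
      show "respects_choice (plab win) cstar (Node a L cs) y" using True s by simp
      show "L = plab win \<Longrightarrow> \<exists>c0\<in>set cs. groot c0 = cstar a \<and>
          (\<forall>c'\<in>set cs. dd d \<theta> win \<mu> c' \<le> dd d \<theta> win \<mu> c0)"
        using cstar_argmax s_subtree s by blast
    qed
    then show ?thesis using step True IH[OF path y_subtree] s_pos \<open>x = s\<close> by auto
  next
    case False
    then show ?thesis using step \<open>x = s\<close> by simp
  qed
qed

theorem proposition9:
  fixes A A' :: "real \<Rightarrow> real" and I :: "real set" and \<theta> :: real
    and t :: "'a gtree" and \<mu> :: "'a \<Rightarrow> real" and cstar :: "'a \<Rightarrow> 'a"
    and wfb :: "'a \<Rightarrow> 'a \<Rightarrow> real" and l :: 'a and ts :: "'a gtree list"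
  defines "d \<equiv> kl A A' I"
    and "win \<equiv> \<theta> \<le> tval \<mu> t"
  assumes I_open: "open I" and I_int: "\<forall>x\<in>I. \<forall>y\<in>I. \<forall>z. x \<le> z \<and> z \<le> y \<longrightarrow> z \<in> I"
    and A_deriv: "\<forall>\<eta>\<in>I. (A has_real_derivative A' \<eta>) (at \<eta>)"
    and A'_mono: "strict_mono_on I A'"
    and theta_X: "\<theta> \<in> A' ` I"
    and wf: "wf_tree t"
    and mu_X: "\<forall>x\<in>leaves t. \<mu> x \<in> A' ` I"
    and V_ne: "tval \<mu> t \<noteq> \<theta>"
    and cstar_argmax: "\<forall>a L cs. Node a L cs \<in> subtrees t \<and> L = plab win \<longrightarrow>
          (\<exists>c\<in>set cs. groot c = cstar a \<and>
             (\<forall>c'\<in>set cs. dd d \<theta> win \<mu> c' \<le> dd d \<theta> win \<mu> c))"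
    and wfb_prob: "\<forall>a L cs. Node a L cs \<in> subtrees t \<longrightarrow>
          (\<forall>x\<in>leaves (Node a L cs). 0 \<le> wfb a x) \<and>
          (\<Sum>x\<in>leaves (Node a L cs). wfb a x) = 1"
    and path: "root_path t ts l"
  shows "0 < wt d \<theta> win \<mu> cstar wfb t l \<longleftrightarrow>
           (\<forall>i<length ts. 0 < dd d \<theta> win \<mu> (ts ! i)) \<and>
           (\<forall>i a cs. Suc i < length ts \<and> ts ! i = Node a (plab win) cs \<longrightarrow>
               groot (ts ! Suc i) = cstar a)"
proof -
  have leaf_div_pos: "\<forall>x\<in>leaves t. \<mu> x \<noteq> \<theta> \<longrightarrow> 0 < d (\<mu> x) \<theta>"
    unfolding d_def using mu_X theta_X by (auto intro: kl_pos[OF I_int A_deriv A'_mono])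
  have "strict_outcome win \<theta> (tval \<mu> t)"
    using V_ne unfolding win_def strict_outcome_def by auto
  then have root_pos: "0 < dd d \<theta> win \<mu> t"
    using dd_pos_if_strict_outcome[where d = d, OF leaf_div_pos] wf unfolding wf_tree_def by simp
  have "distinct (nodes t)" using wf unfolding wf_tree_def by simp
  then have "0 < wt d \<theta> win \<mu> cstar wfb t l \<longleftrightarrow>
      (\<forall>u\<in>set ts. 0 < dd d \<theta> win \<mu> u) \<and> successively (respects_choice (plab win) cstar) ts"
    by (rule wt_pos_iff_root_path[OF path self_in_subtrees _ cstar_argmax root_pos])
  then show ?thesis
    by (auto simp: all_set_conv_all_nth successively_iff_nth respects_choice_def)
qed

end
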